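(* Let $X$ be a Polish space and $2\le\xi<\omega_1$. (1) If there is a monotone $\Sigma^0_\xi$ hull operation on $\mathcal{M}$ with respect to $\mathcal{M}$, then there is a monotone $\Pi^0_{\xi+1}$ hull operation on $\mathtt{Baire}$ with respect to $\mathcal{M}$. (2) If there is a monotone $\Pi^0_\xi$ hull operation on $\mathcal{M}$ with respect to $\mathcal{M}$, then there is a monotone $\Pi^0_\xi$ hull operation on $\mathtt{Baire}$ with respect to $\mathcal{M}$.
   Context: $\mathcal{M}$ is the $\sigma$-ideal of meager subsets of $X$, and $\mathtt{Baire}$ is the $\sigma$-algebra of subsets of $X$ with the Baire property. A Borel hull operation on a family $\mathcal{F}$ with respect to $\mathcal{M}$ is a map $\psi$ from $\mathcal{F}$ to the Borel sets with $A\subseteq\psi(A)$ and $\psi(A)\setminus A\in\mathcal{M}$ for every $A\in\mathcal{F}$. It is monotone if $A_1\subseteq A_2$ in $\mathcal{F}$ implies $\psi(A_1)\subseteq\psi(A_2)$. It is a $\mathcal{K}$ hull operation, for a Borel class $\mathcal{K}$ such as $\Sigma^0_\xi$ or $\Pi^0_\xi$, if all its values belong to $\mathcal{K}$. *)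

theory Defs
  imports "HOL-Analysis.Analysis"
begin

definition nowhere_dense :: "'a::topological_space set \<Rightarrow> bool" where
  "nowhere_dense A \<longleftrightarrow> interior (closure A) = {}"

definition meager :: "'a::topological_space set \<Rightarrow> bool" where
  "meager A \<longleftrightarrow> (\<exists>F :: nat \<Rightarrow> 'a set. (\<forall>n. nowhere_dense (F n)) \<and> A \<subseteq> (\<Union>n. F n))"

definition meager_ideal :: "'a::topological_space set set" where
  "meager_ideal = {A. meager A}"

definition baire_property :: "'a::topological_space set \<Rightarrow> bool" where
  "baire_property A \<longleftrightarrow> (\<exists>U. open U \<and> meager ((A - U) \<union> (U - A)))"

definition Baire_sets :: "'a::topological_space set set" where
  "Baire_sets = {A. baire_property A}"

text \<open>A countable ordinal is represented by (the order type of) a well-order on a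
subset of nat.  The ordinal
is 0 iff the field is empty, 1 iff the field is a singleton.\<close>

definition countable_ordinal :: "nat rel \<Rightarrow> bool" where
  "countable_ordinal r \<longleftrightarrow> Well_order r"

definition ord_is_one :: "nat rel \<Rightarrow> bool" where
  "ord_is_one r \<longleftrightarrow> (\<exists>a. Field r = {a})"

definition ord_ge_two :: "nat rel \<Rightarrow> bool" where
  "ord_ge_two r \<longleftrightarrow> (\<exists>a b. a \<in> Field r \<and> b \<in> Field r \<and> a \<noteq> b)"

definition ord_is_succ :: "nat rel \<Rightarrow> nat rel \<Rightarrow> bool" where
  "ord_is_succ r' r \<longleftrightarrow> Well_order r' \<and> (r, r') \<in> ordLess \<and>
     (\<forall>s :: nat rel. (r, s) \<in> ordLess \<longrightarrow> (r', s) \<in> ordLeq)"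

text \<open>Additive Borel classes: Sigma^0_1 = open sets; for xi > 1, Sigma^0_xi =
countable unions of sets from Pi^0_eta, 1 <= eta < xi, where Pi^0_eta are the
complements of Sigma^0_eta sets.\<close>
inductive borel_Sigma :: "nat rel \<Rightarrow> 'a::topological_space set \<Rightarrow> bool" where
  Sigma_open: "Well_order r \<Longrightarrow> ord_is_one r \<Longrightarrow> open A \<Longrightarrow> borel_Sigma r A"
| Sigma_union: "Well_order r \<Longrightarrow>
     (\<And>n. \<exists>s. (s, r) \<in> ordLess \<and> Field s \<noteq> {} \<and> borel_Sigma s (- F n)) \<Longrightarrow>
     borel_Sigma r (\<Union>n::nat. F n)"

definition borel_Pi :: "nat rel \<Rightarrow> 'a::topological_space set \<Rightarrow> bool" where
  "borel_Pi r A \<longleftrightarrow> borel_Sigma r (- A)"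

definition hull_operation ::
  "'a::topological_space set set \<Rightarrow> ('a set \<Rightarrow> 'a set) \<Rightarrow> bool" where
  "hull_operation F \<psi> \<longleftrightarrow>
     (\<forall>A\<in>F. \<psi> A \<in> sets borel \<and> A \<subseteq> \<psi> A \<and> \<psi> A - A \<in> meager_ideal)"

definition monotone_hull_op ::
  "'a::topological_space set set \<Rightarrow> ('a set \<Rightarrow> 'a set) \<Rightarrow> bool" where
  "monotone_hull_op F \<psi> \<longleftrightarrow>
     hull_operation F \<psi> \<and> (\<forall>A1\<in>F. \<forall>A2\<in>F. A1 \<subseteq> A2 \<longrightarrow> \<psi> A1 \<subseteq> \<psi> A2)"

definition K_valued :: "('a set \<Rightarrow> bool) \<Rightarrow> 'a set set \<Rightarrow> ('a set \<Rightarrow> 'a set) \<Rightarrow> bool" where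
  "K_valued K F \<psi> \<longleftrightarrow> (\<forall>A\<in>F. K (\<psi> A))"

end

theory Submission
  imports Defs
begin

(* Fix a countable base B. For A with the Baire property set
     phi A = INT {-V Un psi (A Int V) | V in B, A Int V meager}.
   Then A <= phi A, and phi is monotone since psi is and since A1 Int V is meager whenever
   A2 Int V is. Having the Baire property, A is comeager outside the union of the basic sets
   in which it is meager, while inside such a V the set phi A - A lies in the meager set
   psi (A Int V) - A Int V; so phi A - A is meager. As xi >= 2, adding the closed set -V keeps
   psi (A Int V) in Sigma^0_xi (resp. Pi^0_xi), and a countable intersection of such sets is
   Pi^0_(xi+1) (resp. Pi^0_xi). *)

lemma ord_is_one_below_ord_ge_two:
  assumes wo: "Well_order r" and two: "ord_ge_two r"
  obtains o1 where "Well_order o1" "ord_is_one o1" "(o1, r) \<in> ordLess"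
proof -
  obtain a b where ab: "a \<in> Field r" "b \<in> Field r" "a \<noteq> b"
    using two unfolding ord_ge_two_def by blast
  let ?o1 = "Restr r {a}"
  have wo1: "Well_order ?o1" using Well_order_Restr wo by blast
  have "(a, a) \<in> r" using ab(1) wo by (auto simp: order_on_defs refl_on_def)
  then have field: "Field ?o1 = {a}" by (auto simp: Field_def)
  have "(?o1, r) \<in> ordLess"
  proof (rule ccontr)
    assume "(?o1, r) \<notin> ordLess"
    then obtain f where "embed r ?o1 f"
      using ordLess_or_ordLeq[OF wo1 wo] unfolding ordLeq_def by blast
    then have "inj_on f (Field r)" and "f ` Field r \<subseteq> {a}"
      using embed_inj_on[OF wo] embed_in_Field[of r ?o1 f] field by blast+
    then show False using ab by (metis image_subset_iff inj_onD singletonD)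
  qed
  with wo1 field show ?thesis using that unfolding ord_is_one_def by blast
qed

lemma ordLess_ord_is_one_imp_Field_empty:
  assumes "ord_is_one s" and "(t, s) \<in> ordLess"
  shows "Field t = {}"
proof (rule ccontr)
  assume ne: "Field t \<noteq> {}"
  obtain a where a: "Field s = {a}" using assms(1) unfolding ord_is_one_def by blast
  obtain f where wo: "Well_order t" and "embedS t s f"
    using assms(2) unfolding ordLess_def by blast
  then have emb: "embed t s f" and not_bij: "\<not> bij_betw f (Field t) (Field s)"
    by (auto simp: embedS_def)
  have "f ` Field t = {a}" using embed_in_Field[OF emb] a ne by auto
  then have "bij_betw f (Field t) (Field s)"
    using embed_inj_on[OF wo emb] a by (simp add: bij_betw_def)
  with not_bij show False by blast
qed

lemma borel_Sigma_ord_is_one_imp_open: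
  assumes "ord_is_one s" and "borel_Sigma s X"
  shows "open X"
  using assms(2)
proof cases
  case (Sigma_union F)
  then show ?thesis using ordLess_ord_is_one_imp_Field_empty[OF assms(1)] by blast
qed

text \<open>\<open>borel_Pi_below r\<close> is \<open>\<Union>{\<Pi>\<^sup>0\<^sub>\<eta> | 1 \<le> \<eta> < r}\<close>, whose countable unions form
  \<open>\<Sigma>\<^sup>0\<^sub>r\<close>.\<close>
definition borel_Pi_below :: "nat rel \<Rightarrow> 'a::topological_space set \<Rightarrow> bool" where
  "borel_Pi_below r A \<longleftrightarrow> (\<exists>s. (s, r) \<in> ordLess \<and> Field s \<noteq> {} \<and> borel_Pi s A)"

lemma borel_Sigma_Union:
  assumes "Well_order r" and "countable \<A>" and "\<A> \<noteq> {}"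
    and "\<And>A. A \<in> \<A> \<Longrightarrow> borel_Pi_below r A"
  shows "borel_Sigma r (\<Union>\<A>)"
proof -
  have "\<exists>s. (s, r) \<in> ordLess \<and> Field s \<noteq> {} \<and> borel_Sigma s (- from_nat_into \<A> n)" for n
    using assms(4)[OF from_nat_into[OF assms(3)]] unfolding borel_Pi_below_def borel_Pi_def .
  then have "borel_Sigma r (\<Union>n. from_nat_into \<A> n)" by (rule Sigma_union[OF assms(1)])
  then show ?thesis using assms(2,3) by simp
qed

lemma borel_Sigma_ord_ge_two_E:
  assumes "ord_ge_two r" and "borel_Sigma r X"
  obtains F :: "nat \<Rightarrow> 'a::topological_space set"
  where "X = (\<Union>n. F n)" and "\<And>n. borel_Pi_below r (F n)"
  using assms(2)
proof cases
  case Sigma_open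
  then show ?thesis using assms(1) by (auto simp: ord_ge_two_def ord_is_one_def)
next
  case (Sigma_union F)
  then show ?thesis using that by (auto simp: borel_Pi_below_def borel_Pi_def)
qed

lemma closed_imp_borel_Pi_below:
  assumes "Well_order r" and "ord_ge_two r" and "closed C"
  shows "borel_Pi_below r C"
proof -
  obtain o1 where o1: "Well_order o1" "ord_is_one o1" "(o1, r) \<in> ordLess"
    using ord_is_one_below_ord_ge_two assms(1,2) by blast
  have "borel_Sigma o1 (- C)" using o1(1,2) assms(3) by (intro Sigma_open) auto
  moreover have "Field o1 \<noteq> {}" using o1(2) unfolding ord_is_one_def by auto
  ultimately show ?thesis using o1(3) unfolding borel_Pi_below_def borel_Pi_def by blast
qed

lemma borel_Sigma_closed:
  assumes "Well_order r" and "ord_ge_two r" and "closed C"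
  shows "borel_Sigma r C"
proof -
  have "borel_Sigma r (\<Union>{C})"
    by (rule borel_Sigma_Union[OF assms(1)]) (use closed_imp_borel_Pi_below[OF assms] in auto)
  then show ?thesis by simp
qed

lemma borel_Sigma_Un_closed:
  assumes "Well_order r" and "ord_ge_two r" and "borel_Sigma r X" and "closed C"
  shows "borel_Sigma r (C \<union> X)"
proof -
  obtain F :: "nat \<Rightarrow> _" where F: "X = (\<Union>n. F n)" "\<And>n. borel_Pi_below r (F n)"
    using borel_Sigma_ord_ge_two_E[OF assms(2,3)] by blast
  have "borel_Sigma r (\<Union>(insert C (range F)))"
  proof (rule borel_Sigma_Union[OF assms(1)])
    fix A assume "A \<in> insert C (range F)"
    then show "borel_Pi_below r A" using F(2) closed_imp_borel_Pi_below[OF assms(1,2,4)] by blast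
  qed auto
  then show ?thesis using F(1) by simp
qed

lemma open_eq_UN_closed:
  fixes U :: "'a::metric_space set"
  assumes "open U"
  obtains D :: "nat \<Rightarrow> 'a set" where "\<And>k. closed (D k)" and "U = (\<Union>k. D k)"
proof -
  have "openin euclidean U" using assms by (simp only: open_openin)
  then have "fsigma_in euclidean U" by (rule open_imp_fsigma_in[OF metrizable_space_euclidean])
  then obtain D :: "nat \<Rightarrow> 'a set" where D: "\<And>k. closedin euclidean (D k)" "\<Union>(range D) = U"
    unfolding fsigma_in_ascending by blast
  have "closed (D k)" for k using D(1) by simp
  moreover have "U = (\<Union>k. D k)" using D(2) by (rule sym)
  ultimately show ?thesis by (rule that)
qed

lemma borel_Sigma_Un_open:
  fixes U :: "'a::metric_space set"
  assumes "Well_order s" and "Field s \<noteq> {}" and "borel_Sigma s X" and "open U"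
  shows "borel_Sigma s (U \<union> X)"
proof (cases "ord_ge_two s")
  case False
  obtain a where "a \<in> Field s" using assms(2) by blast
  with False have "Field s = {a}" unfolding ord_ge_two_def by blast
  then have "ord_is_one s" unfolding ord_is_one_def by blast
  then have "open X" using borel_Sigma_ord_is_one_imp_open assms(3) by blast
  then show ?thesis using assms(1,4) \<open>ord_is_one s\<close> by (simp add: Sigma_open open_Un)
next
  case True
  obtain F :: "nat \<Rightarrow> _" where F: "X = (\<Union>n. F n)" "\<And>n. borel_Pi_below s (F n)"
    using borel_Sigma_ord_ge_two_E[OF True assms(3)] by blast
  obtain D :: "nat \<Rightarrow> _" where D: "\<And>k. closed (D k)" "U = (\<Union>k. D k)"
    using open_eq_UN_closed[OF assms(4)] by blast
  have "borel_Sigma s (\<Union>(range D \<union> range F))"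
  proof (rule borel_Sigma_Union[OF assms(1)])
    fix A assume "A \<in> range D \<union> range F"
    then show "borel_Pi_below s A" using F(2) closed_imp_borel_Pi_below[OF assms(1) True D(1)] by blast
  qed auto
  then show ?thesis using F(1) D(2) by (simp add: Union_Un_distrib)
qed

lemma borel_Pi_below_Int_closed:
  fixes A :: "'a::metric_space set"
  assumes "borel_Pi_below r A" and "closed D"
  shows "borel_Pi_below r (D \<inter> A)"
proof -
  obtain s where s: "(s, r) \<in> ordLess" "Field s \<noteq> {}" "borel_Sigma s (- A)"
    using assms(1) unfolding borel_Pi_below_def borel_Pi_def by blast
  have "Well_order s" using s(1) unfolding ordLess_def by blast
  then have "borel_Sigma s (- D \<union> - A)"
    using borel_Sigma_Un_open s(2,3) assms(2) by blast
  then show ?thesis using s(1,2) unfolding borel_Pi_below_def borel_Pi_def by auto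
qed

lemma borel_Pi_Un_closed:
  fixes P :: "'a::metric_space set"
  assumes "Well_order r" and "ord_ge_two r" and "borel_Pi r P" and "closed C"
  shows "borel_Pi r (C \<union> P)"
proof -
  obtain F :: "nat \<Rightarrow> _" where F: "- P = (\<Union>n. F n)" "\<And>n. borel_Pi_below r (F n)"
    using borel_Sigma_ord_ge_two_E[OF assms(2)] assms(3) unfolding borel_Pi_def by blast
  obtain D :: "nat \<Rightarrow> _" where D: "\<And>k. closed (D k)" "- C = (\<Union>k. D k)"
    using open_eq_UN_closed[of "- C"] assms(4) by blast
  have "borel_Sigma r (\<Union>((\<lambda>(k, n). D k \<inter> F n) ` UNIV))"
  proof (rule borel_Sigma_Union[OF assms(1)])
    fix A assume "A \<in> (\<lambda>(k, n). D k \<inter> F n) ` UNIV"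
    then obtain k n where "A = D k \<inter> F n" by auto
    then show "borel_Pi_below r A" using borel_Pi_below_Int_closed[OF F(2) D(1)] by simp
  qed auto
  moreover have "\<Union>((\<lambda>(k, n). D k \<inter> F n) ` UNIV) = - (C \<union> P)"
    using F(1) D(2) by blast
  ultimately show ?thesis unfolding borel_Pi_def by simp
qed

lemma borel_Pi_INT:
  fixes P :: "'i \<Rightarrow> 'a::topological_space set"
  assumes "Well_order r" and "ord_ge_two r" and "countable I"
    and "\<And>i. i \<in> I \<Longrightarrow> borel_Pi r (P i)"
  shows "borel_Pi r (\<Inter>i\<in>I. P i)"
proof -
  have "\<forall>i\<in>I. \<exists>F :: nat \<Rightarrow> 'a set. - P i = (\<Union>n. F n) \<and> (\<forall>n. borel_Pi_below r (F n))"
    using borel_Sigma_ord_ge_two_E[OF assms(2)] assms(4) unfolding borel_Pi_def by metis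
  then obtain F :: "'i \<Rightarrow> nat \<Rightarrow> 'a set" where F: "\<And>i. i \<in> I \<Longrightarrow> - P i = (\<Union>n. F i n)"
    "\<And>i n. i \<in> I \<Longrightarrow> borel_Pi_below r (F i n)"
    by metis
  let ?\<A> = "insert {} (\<Union>i\<in>I. range (F i))"
  have "borel_Sigma r (\<Union>?\<A>)"
  proof (rule borel_Sigma_Union[OF assms(1)])
    fix A assume "A \<in> ?\<A>"
    then show "borel_Pi_below r A"
      using F(2) closed_imp_borel_Pi_below[OF assms(1,2) closed_empty] by blast
  qed (simp_all add: assms(3))
  moreover have "- (\<Inter>i\<in>I. P i) = (\<Union>i\<in>I. \<Union>n. F i n)"
    using F(1) by (simp add: uminus_INF)
  then have "\<Union>?\<A> = - (\<Inter>i\<in>I. P i)" by auto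
  ultimately show ?thesis unfolding borel_Pi_def by simp
qed

lemma borel_Pi_succ_INT:
  fixes S :: "'i \<Rightarrow> 'a::topological_space set"
  assumes "Well_order r" and "ord_ge_two r" and "ord_is_succ r' r" and "countable I"
    and "\<And>i. i \<in> I \<Longrightarrow> borel_Sigma r (S i)"
  shows "borel_Pi r' (\<Inter>i\<in>I. S i)"
proof -
  have "(r, r') \<in> ordLess" and "Well_order r'" and "Field r \<noteq> {}"
    using assms(2,3) by (auto simp: ord_is_succ_def ord_ge_two_def)
  then have below: "borel_Pi_below r' A" if "borel_Sigma r (- A)" for A :: "'a set"
    using that unfolding borel_Pi_below_def borel_Pi_def by blast
  have "borel_Sigma r (- {} :: 'a set)" using borel_Sigma_closed[OF assms(1,2) closed_UNIV] by simp
  then have "borel_Sigma r' (\<Union>(insert {} ((\<lambda>i. - S i) ` I)))"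
    using assms(5) below by (intro borel_Sigma_Union[OF \<open>Well_order r'\<close>]) (auto simp: assms(4))
  then show ?thesis unfolding borel_Pi_def by (simp add: uminus_INF)
qed

lemma borel_Sigma_imp_borel: "borel_Sigma r A \<Longrightarrow> A \<in> sets borel"
proof (induction rule: borel_Sigma.induct)
  case (Sigma_union r F)
  then have "F n \<in> sets borel" for n by (metis borel_comp double_complement)
  then show ?case by auto
qed auto

lemma borel_Pi_imp_borel: "borel_Pi r A \<Longrightarrow> A \<in> sets borel"
  unfolding borel_Pi_def by (metis borel_Sigma_imp_borel borel_comp double_complement)

lemma meager_subset: "meager A \<Longrightarrow> B \<subseteq> A \<Longrightarrow> meager B"
  unfolding meager_def by blast

lemma nowhere_dense_imp_meager: "nowhere_dense A \<Longrightarrow> meager A"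
  unfolding meager_def by (intro exI[of _ "\<lambda>_. A"]) auto

lemma meager_countable_Union:
  assumes "countable \<A>" and "\<And>A. A \<in> \<A> \<Longrightarrow> meager A"
  shows "meager (\<Union>\<A>)"
proof -
  obtain F :: "'a set \<Rightarrow> nat \<Rightarrow> 'a set" where F: "\<And>A n. A \<in> \<A> \<Longrightarrow> nowhere_dense (F A n)"
    "\<And>A. A \<in> \<A> \<Longrightarrow> A \<subseteq> (\<Union>n. F A n)"
    using assms(2) unfolding meager_def by metis
  define \<N> where "\<N> = insert {} (\<Union>A\<in>\<A>. range (F A))"
  have "countable \<N>" and "\<N> \<noteq> {}" using assms(1) by (auto simp: \<N>_def)
  then have "range (from_nat_into \<N>) = \<N>" by simp
  moreover have "nowhere_dense N" if "N \<in> \<N>" for N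
    using that F(1) by (auto simp: \<N>_def nowhere_dense_def)
  moreover have "\<Union>\<A> \<subseteq> \<Union>\<N>" using F(2) by (fastforce simp: \<N>_def)
  ultimately show ?thesis unfolding meager_def
    by (intro exI[of _ "from_nat_into \<N>"]) (metis rangeI)
qed

lemma meager_Un: "meager A \<Longrightarrow> meager B \<Longrightarrow> meager (A \<union> B)"
  using meager_countable_Union[of "{A, B}"] by auto

lemma nowhere_dense_frontier_open:
  assumes "open U"
  shows "nowhere_dense (frontier U)"
proof -
  let ?W = "interior (frontier U)"
  have "?W \<inter> U = {}" using assms interior_subset by (auto simp: frontier_def interior_open)
  then have "?W \<inter> closure U = {}" using open_Int_closure_eq_empty[of ?W U] by simp
  moreover have "?W \<subseteq> closure U" using interior_subset frontier_def by blast
  ultimately have "?W = {}" by blast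
  then show ?thesis unfolding nowhere_dense_def by (simp add: closure_closed)
qed

text \<open>A point of \<open>interior (- U)\<close> lies in a basic set in which \<open>A\<close> is meager, so what
  remains is covered by the frontier of \<open>U\<close> and the meager set \<open>A \<triangle> U\<close>.\<close>
lemma baire_property_comeager_off_meager_part:
  assumes "topological_basis \<B>" and "baire_property A"
  shows "meager (- \<Union>{V \<in> \<B>. meager (A \<inter> V)} - A)"
proof -
  obtain U where U: "open U" "meager ((A - U) \<union> (U - A))"
    using assms(2) unfolding baire_property_def by blast
  have "interior (- U) \<subseteq> \<Union>{V \<in> \<B>. meager (A \<inter> V)}"
  proof
    fix x assume "x \<in> interior (- U)"
    then obtain V where V: "V \<in> \<B>" "x \<in> V" "V \<subseteq> interior (- U)"
      using topological_basisE[OF assms(1) open_interior] by blast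
    then have "A \<inter> V \<subseteq> (A - U) \<union> (U - A)" using interior_subset by blast
    then show "x \<in> \<Union>{V \<in> \<B>. meager (A \<inter> V)}" using U(2) V meager_subset by blast
  qed
  then have "- \<Union>{V \<in> \<B>. meager (A \<inter> V)} - A \<subseteq> frontier U \<union> ((A - U) \<union> (U - A))"
    using interior_complement U(1) by (auto simp: frontier_def interior_open)
  moreover have "meager (frontier U \<union> ((A - U) \<union> (U - A)))"
    using meager_Un nowhere_dense_imp_meager nowhere_dense_frontier_open U by blast
  ultimately show ?thesis using meager_subset by blast
qed

definition baire_hull :: "'a::topological_space set set \<Rightarrow> ('a set \<Rightarrow> 'a set) \<Rightarrow> 'a set \<Rightarrow> 'a set"
  where "baire_hull \<B> \<psi> A = (\<Inter>V \<in> {V \<in> \<B>. meager (A \<inter> V)}. - V \<union> \<psi> (A \<inter> V))"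

lemma subset_baire_hull:
  assumes "hull_operation meager_ideal \<psi>"
  shows "A \<subseteq> baire_hull \<B> \<psi> A"
  using assms unfolding baire_hull_def hull_operation_def meager_ideal_def by blast

lemma baire_hull_mono:
  assumes "monotone_hull_op meager_ideal \<psi>" and "A1 \<subseteq> A2"
  shows "baire_hull \<B> \<psi> A1 \<subseteq> baire_hull \<B> \<psi> A2"
  unfolding baire_hull_def
proof (intro INT_greatest)
  fix V assume V: "V \<in> {V \<in> \<B>. meager (A2 \<inter> V)}"
  then have meager2: "meager (A2 \<inter> V)" by simp
  then have meager1: "meager (A1 \<inter> V)" by (rule meager_subset) (use assms(2) in blast)
  have "A1 \<inter> V \<subseteq> A2 \<inter> V" using assms(2) by blast
  then have "\<psi> (A1 \<inter> V) \<subseteq> \<psi> (A2 \<inter> V)"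
    using assms(1) meager1 meager2 unfolding monotone_hull_op_def meager_ideal_def by blast
  moreover have "(\<Inter>W \<in> {W \<in> \<B>. meager (A1 \<inter> W)}. - W \<union> \<psi> (A1 \<inter> W)) \<subseteq> - V \<union> \<psi> (A1 \<inter> V)"
    using V meager1 by (intro INT_lower) simp
  ultimately show "(\<Inter>W \<in> {W \<in> \<B>. meager (A1 \<inter> W)}. - W \<union> \<psi> (A1 \<inter> W)) \<subseteq> - V \<union> \<psi> (A2 \<inter> V)"
    by blast
qed

lemma meager_baire_hull_diff:
  assumes "hull_operation meager_ideal \<psi>" and "countable \<B>" and "topological_basis \<B>"
    and "baire_property A"
  shows "meager (baire_hull \<B> \<psi> A - A)"
proof -
  let ?\<V> = "{V \<in> \<B>. meager (A \<inter> V)}"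
  have "meager (\<psi> (A \<inter> V) - A \<inter> V)" if "V \<in> ?\<V>" for V
    using assms(1) that unfolding hull_operation_def meager_ideal_def by blast
  then have "meager (\<Union>V \<in> ?\<V>. \<psi> (A \<inter> V) - A \<inter> V)"
    using assms(2) by (intro meager_countable_Union) auto
  then have "meager ((- \<Union>?\<V> - A) \<union> (\<Union>V \<in> ?\<V>. \<psi> (A \<inter> V) - A \<inter> V))"
    using meager_Un baire_property_comeager_off_meager_part[OF assms(3,4)] by blast
  moreover have "baire_hull \<B> \<psi> A - A \<subseteq> (- \<Union>?\<V> - A) \<union> (\<Union>V \<in> ?\<V>. \<psi> (A \<inter> V) - A \<inter> V)"
  proof
    fix x assume x: "x \<in> baire_hull \<B> \<psi> A - A"
    show "x \<in> (- \<Union>?\<V> - A) \<union> (\<Union>V \<in> ?\<V>. \<psi> (A \<inter> V) - A \<inter> V)"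
    proof (cases "x \<in> \<Union>?\<V>")
      case True
      then obtain V where V: "V \<in> ?\<V>" "x \<in> V" by blast
      then have "x \<in> \<psi> (A \<inter> V)" using x unfolding baire_hull_def by blast
      then show ?thesis using V x by blast
    qed (use x in blast)
  qed
  ultimately show ?thesis by (rule meager_subset)
qed

lemma baire_hull_borel_Pi_succ:
  assumes "Well_order r" and "ord_ge_two r" and "ord_is_succ r' r"
    and "countable \<B>" and "\<And>V. V \<in> \<B> \<Longrightarrow> open V"
    and "K_valued (borel_Sigma r) meager_ideal \<psi>"
  shows "borel_Pi r' (baire_hull \<B> \<psi> A)"
  unfolding baire_hull_def
proof (rule borel_Pi_succ_INT[OF assms(1-3)])
  fix V assume "V \<in> {V \<in> \<B>. meager (A \<inter> V)}"
  then have "borel_Sigma r (\<psi> (A \<inter> V))" and "closed (- V)"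
    using assms(5,6) unfolding K_valued_def meager_ideal_def by (auto simp: closed_Compl)
  then show "borel_Sigma r (- V \<union> \<psi> (A \<inter> V))" by (rule borel_Sigma_Un_closed[OF assms(1,2)])
qed (use assms(4) in auto)

lemma baire_hull_borel_Pi:
  fixes \<psi> :: "'a::metric_space set \<Rightarrow> 'a set"
  assumes "Well_order r" and "ord_ge_two r"
    and "countable \<B>" and "\<And>V. V \<in> \<B> \<Longrightarrow> open V"
    and "K_valued (borel_Pi r) meager_ideal \<psi>"
  shows "borel_Pi r (baire_hull \<B> \<psi> A)"
  unfolding baire_hull_def
proof (rule borel_Pi_INT[OF assms(1,2)])
  fix V assume "V \<in> {V \<in> \<B>. meager (A \<inter> V)}"
  then have "borel_Pi r (\<psi> (A \<inter> V))" and "closed (- V)"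
    using assms(4,5) unfolding K_valued_def meager_ideal_def by (auto simp: closed_Compl)
  then show "borel_Pi r (- V \<union> \<psi> (A \<inter> V))" by (rule borel_Pi_Un_closed[OF assms(1,2)])
qed (use assms(3) in auto)

lemma ex_monotone_hull_op_Baire_sets:
  fixes \<psi> :: "'a::second_countable_topology set \<Rightarrow> 'a set"
  assumes hull: "monotone_hull_op meager_ideal \<psi>"
    and K: "\<And>\<B> A. countable \<B> \<Longrightarrow> (\<And>V. V \<in> \<B> \<Longrightarrow> open V) \<Longrightarrow> K (baire_hull \<B> \<psi> A)"
    and K_borel: "\<And>A. K A \<Longrightarrow> A \<in> sets borel"
  shows "\<exists>\<phi> :: 'a set \<Rightarrow> 'a set. monotone_hull_op Baire_sets \<phi> \<and> K_valued K Baire_sets \<phi>"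
proof -
  obtain \<B> :: "'a set set" where "countable \<B>" and basis: "topological_basis \<B>"
    using ex_countable_basis by blast
  then have K_hull: "K (baire_hull \<B> \<psi> A)" for A
    using K topological_basis_open[OF basis] by blast
  have hull': "hull_operation meager_ideal \<psi>" using hull by (simp add: monotone_hull_op_def)
  have "hull_operation Baire_sets (baire_hull \<B> \<psi>)"
    using K_borel[OF K_hull] subset_baire_hull[OF hull']
      meager_baire_hull_diff[OF hull' \<open>countable \<B>\<close> basis]
    unfolding hull_operation_def Baire_sets_def meager_ideal_def by simp
  then have "monotone_hull_op Baire_sets (baire_hull \<B> \<psi>)"
    unfolding monotone_hull_op_def by (simp add: baire_hull_mono[OF hull])
  moreover have "K_valued K Baire_sets (baire_hull \<B> \<psi>)"
    unfolding K_valued_def using K_hull by blast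
  ultimately show ?thesis by blast
qed

theorem corollary3p3:
  fixes r :: "nat rel"
  assumes "countable_ordinal r" and "ord_ge_two r"
  shows "((\<exists>\<psi> :: 'a::polish_space set \<Rightarrow> 'a set.
              monotone_hull_op meager_ideal \<psi> \<and> K_valued (borel_Sigma r) meager_ideal \<psi>)
          \<longrightarrow> (\<forall>r'. ord_is_succ r' r \<longrightarrow>
               (\<exists>\<phi> :: 'a set \<Rightarrow> 'a set.
                  monotone_hull_op Baire_sets \<phi> \<and> K_valued (borel_Pi r') Baire_sets \<phi>)))
       \<and> ((\<exists>\<psi> :: 'a::polish_space set \<Rightarrow> 'a set.
              monotone_hull_op meager_ideal \<psi> \<and> K_valued (borel_Pi r) meager_ideal \<psi>)
          \<longrightarrow> (\<exists>\<phi> :: 'a set \<Rightarrow> 'a set.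
                  monotone_hull_op Baire_sets \<phi> \<and> K_valued (borel_Pi r) Baire_sets \<phi>))"
proof -
  have wo: "Well_order r" using assms(1) by (simp add: countable_ordinal_def)
  show ?thesis
  proof (intro conjI impI allI; elim exE conjE)
    fix r' and \<psi> :: "'a set \<Rightarrow> 'a set"
    assume "ord_is_succ r' r" "monotone_hull_op meager_ideal \<psi>"
      "K_valued (borel_Sigma r) meager_ideal \<psi>"
    then show "\<exists>\<phi> :: 'a set \<Rightarrow> 'a set. monotone_hull_op Baire_sets \<phi> \<and> K_valued (borel_Pi r') Baire_sets \<phi>"
      using baire_hull_borel_Pi_succ[OF wo assms(2)] borel_Pi_imp_borel
      by (intro ex_monotone_hull_op_Baire_sets) blast+
  next
    fix \<psi> :: "'a set \<Rightarrow> 'a set"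
    assume "monotone_hull_op meager_ideal \<psi>" "K_valued (borel_Pi r) meager_ideal \<psi>"
    then show "\<exists>\<phi> :: 'a set \<Rightarrow> 'a set. monotone_hull_op Baire_sets \<phi> \<and> K_valued (borel_Pi r) Baire_sets \<phi>"
      using baire_hull_borel_Pi[OF wo assms(2)] borel_Pi_imp_borel
      by (intro ex_monotone_hull_op_Baire_sets) blast+
  qed
qed

end
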